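(* The function $A:[0,1)\to\mathbb{R}$, $A(x):=\sum_{k=0}^\infty(-1)^k\frac{4k+2}{(2k+1)^2-x}$, is increasing, $A(0)=\pi/2$, and for all $x\in[0,1)$ \[ -\frac12\le A(x)-\frac{2}{1-x}\le\frac{\pi-4}{2}<-0.42. \] In particular, $A$ extends to a homeomorphism between $[0,1]$ and $[\pi/2,+\infty]\subset\overline{\mathbb{R}}$.
   Context: $\overline{\mathbb{R}}=\mathbb{R}\cup\{+\infty,-\infty\}$ is the two-point compactification of $\mathbb{R}$ with its usual topology. *)

theory Defs
  imports "HOL-Analysis.Analysis" "HOL-Library.Extended_Real"
begin

definition A_term :: "real \<Rightarrow> nat \<Rightarrow> real" where
  "A_term x k = (-1) ^ k * (4 * real k + 2) / ((2 * real k + 1)^2 - x)"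

definition A :: "real \<Rightarrow> real" where
  "A x = (\<Sum>k. A_term x k)"

end

theory Submission
  imports Defs "HOL-Real_Asymp.Real_Asymp"
begin

(* For x, y < 1 the difference A(x) - A(y) is (x - y) times an alternating series whose terms
  2n / ((n^2 - x) (n^2 - y)), n = 2k + 1, decrease to 0; the Leibniz bounds make A strictly
  increasing and locally Lipschitz. The same argument for the tail R(x) = A(x) - 2/(1 - x), i.e.
  the series without its k = 0 term, shows that R decreases on [0,1], so R lies between
  R(0) = pi/2 - 2 and R(1) = -1/2, the latter being a telescoping sum. The lower bound makes
  A tend to infinity at 1, and a continuous injection of the compact [0,1] is a homeomorphism
  onto its image. *)

lemma alternating_series_bounds:
  fixes c :: "nat \<Rightarrow> real"
  assumes lim: "c \<longlonglongrightarrow> 0" and decr: "\<And>k. c (Suc k) < c k"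
  shows "summable (\<lambda>k. (-1)^k * c k)"
    and "0 < (\<Sum>k. (-1)^k * c k)"
    and "(\<Sum>k. (-1)^k * c k) \<le> c 0"
proof -
  have "decseq c" using decr by (intro decseq_SucI less_imp_le)
  hence nonneg: "0 \<le> c k" for k using lim by (rule decseq_ge)
  note L = summable_Leibniz'[of c, OF lim nonneg less_imp_le[OF decr]]
  show "summable (\<lambda>k. (-1)^k * c k)" by (rule L(1))
  have "(\<Sum>i<2*1. (-1)^i * c i) \<le> (\<Sum>k. (-1)^k * c k)" by (rule L(2))
  thus "0 < (\<Sum>k. (-1)^k * c k)" using decr[of 0] by (simp add: numeral_2_eq_2)
  have "(\<Sum>k. (-1)^k * c k) \<le> (\<Sum>i<2*0+1. (-1)^i * c i)" by (rule L(4))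
  thus "(\<Sum>k. (-1)^k * c k) \<le> c 0" by simp
qed

text \<open>The \<open>k\<close>-th terms of the series for \<open>A\<close> at \<open>x\<close> and at \<open>y\<close> differ by
  \<open>\<plusminus>(x - y)\<close> times this coefficient, with \<open>r = 1\<close> (\<open>r = 3\<close> for the tail).\<close>
definition A_diff_coeff :: "real \<Rightarrow> real \<Rightarrow> real \<Rightarrow> nat \<Rightarrow> real" where
  "A_diff_coeff r a b k =
     2 * (2 * real k + r) / (((2 * real k + r)^2 - a) * ((2 * real k + r)^2 - b))"

lemma A_diff_coeff_tendsto_0: "A_diff_coeff r a b \<longlonglongrightarrow> 0"
  unfolding A_diff_coeff_def by real_asymp

lemma quotient_shift_less:
  fixes n a b :: real
  assumes "1 \<le> n" "0 \<le> a" "0 \<le> b" "a < n^2" "b < n^2"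
  shows "(n + 2) / (((n + 2)^2 - a) * ((n + 2)^2 - b)) < n / ((n^2 - a) * (n^2 - b))"
proof -
  have pos: "0 < n^2 - a" "0 < n^2 - b" "0 < (n + 2)^2 - a" "0 < (n + 2)^2 - b"
    using assms by (auto simp: power2_eq_square algebra_simps)
  have factor_a: "(n + 2) * (n^2 - a) < n * ((n + 2)^2 - a)"
    using assms by (simp add: algebra_simps power2_eq_square)
  have factor_b: "n^2 - b \<le> (n + 2)^2 - b"
    using assms by (simp add: power2_eq_square algebra_simps)
  have "((n + 2) * (n^2 - a)) * (n^2 - b) < (n * ((n + 2)^2 - a)) * ((n + 2)^2 - b)"
    using pos assms by (intro mult_less_le_imp_less[OF factor_a factor_b]) auto
  thus ?thesis using pos by (simp add: divide_simps mult.assoc)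
qed

lemma A_diff_coeff_Suc_less:
  assumes "1 \<le> r" "0 \<le> a" "0 \<le> b" "a < r^2" "b < r^2"
  shows "A_diff_coeff r a b (Suc k) < A_diff_coeff r a b k"
proof -
  define n where "n = 2 * real k + r"
  have n: "1 \<le> n" "r \<le> n" using assms by (auto simp: n_def)
  hence "r^2 \<le> n^2" using assms by (intro power_mono) auto
  hence "(n + 2) / (((n + 2)^2 - a) * ((n + 2)^2 - b)) < n / ((n^2 - a) * (n^2 - b))"
    using n assms by (intro quotient_shift_less) linarith+
  moreover have "A_diff_coeff r a b k = 2 * (n / ((n^2 - a) * (n^2 - b)))"
    by (simp add: A_diff_coeff_def n_def)
  moreover have "A_diff_coeff r a b (Suc k) = 2 * ((n + 2) / (((n + 2)^2 - a) * ((n + 2)^2 - b)))"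
    by (simp add: A_diff_coeff_def n_def algebra_simps)
  ultimately show ?thesis by linarith
qed

lemma alternating_A_diff_coeff:
  assumes "1 \<le> r" "0 \<le> a" "0 \<le> b" "a < r^2" "b < r^2"
  shows "summable (\<lambda>k. (-1)^k * A_diff_coeff r a b k)"
    and "0 < (\<Sum>k. (-1)^k * A_diff_coeff r a b k)"
    and "(\<Sum>k. (-1)^k * A_diff_coeff r a b k) \<le> A_diff_coeff r a b 0"
  using alternating_series_bounds[OF A_diff_coeff_tendsto_0 A_diff_coeff_Suc_less[OF assms]]
  by blast+

lemma A_term_diff:
  assumes "x < 1" "y < 1"
  shows "A_term x k - A_term y k = (x - y) * ((-1)^k * A_diff_coeff 1 x y k)"
proof -
  define n where "n = 2 * real k + 1"
  have "1 \<le> n^2" by (simp add: n_def)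
  hence "n^2 - x \<noteq> 0" "n^2 - y \<noteq> 0" using assms by auto
  moreover have "A_term z k = (-1)^k * (2 * n) / (n^2 - z)" for z
    by (simp add: A_term_def n_def)
  moreover have "A_diff_coeff 1 x y k = 2 * n / ((n^2 - x) * (n^2 - y))"
    by (simp add: A_diff_coeff_def n_def)
  ultimately show ?thesis by (simp add: field_simps)
qed

lemma A_term_Suc_diff:
  assumes "x < 9" "y < 9"
  shows "A_term x (Suc k) - A_term y (Suc k) = (y - x) * ((-1)^k * A_diff_coeff 3 x y k)"
proof -
  define n where "n = 2 * real k + 3"
  have "3 \<le> n" by (simp add: n_def)
  hence "3^2 \<le> n^2" by (intro power_mono) auto
  hence "n^2 - x \<noteq> 0" "n^2 - y \<noteq> 0" using assms by auto
  moreover have "A_term z (Suc k) = - ((-1)^k * (2 * n) / (n^2 - z))" for z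
    by (simp add: A_term_def n_def algebra_simps minus_divide_left)
  moreover have "A_diff_coeff 3 x y k = 2 * n / ((n^2 - x) * (n^2 - y))"
    by (simp add: A_diff_coeff_def n_def)
  ultimately show ?thesis by (simp add: field_simps)
qed

lemma A_term_0_sums: "A_term 0 sums (pi / 2)"
proof -
  let ?a = "\<lambda>k::nat. 1 / real (k * 2 + 1)"
  have "?a \<longlonglongrightarrow> 0" by real_asymp
  hence "summable (\<lambda>k. (-1)^k * ?a k)"
    by (rule summable_Leibniz'(1)) (auto simp: frac_le)
  hence "(\<lambda>k. (-1)^k * ?a k) sums (pi / 4)"
    unfolding pi_series by (simp add: summable_sums)
  hence "(\<lambda>k. 2 * ((-1)^k * ?a k)) sums (2 * (pi / 4))"
    by (rule sums_mult)
  moreover have "A_term 0 = (\<lambda>k. 2 * ((-1)^k * ?a k))"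
  proof
    fix k
    define n where "n = 2 * real k + 1"
    have "n \<noteq> 0" by (simp add: n_def add_nonneg_eq_0_iff)
    hence "(-1)^k * (2 * n) / n^2 = 2 * ((-1)^k * (1 / n))"
      by (simp add: power2_eq_square)
    thus "A_term 0 k = 2 * ((-1)^k * ?a k)" by (simp add: A_term_def n_def algebra_simps)
  qed
  ultimately show ?thesis by simp
qed

lemma A_0: "A 0 = pi / 2"
  using A_term_0_sums by (simp add: A_def sums_iff)

lemma summable_A_term:
  assumes "0 \<le> x" "x < 1"
  shows "summable (A_term x)"
proof -
  have "summable (\<lambda>k. A_term 0 k + x * ((-1)^k * A_diff_coeff 1 x 0 k))"
    using A_term_0_sums assms
    by (intro summable_add summable_mult alternating_A_diff_coeff(1)) (auto simp: sums_summable)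
  moreover have "A_term x = (\<lambda>k. A_term 0 k + x * ((-1)^k * A_diff_coeff 1 x 0 k))"
    using A_term_diff[of x 0] assms by (simp add: fun_eq_iff algebra_simps)
  ultimately show ?thesis by simp
qed

lemma A_diff:
  assumes "x \<in> {0..<1}" "y \<in> {0..<1}"
  shows "A x - A y = (x - y) * (\<Sum>k. (-1)^k * A_diff_coeff 1 x y k)"
proof -
  have "A x - A y = (\<Sum>k. A_term x k - A_term y k)"
    unfolding A_def using assms by (intro suminf_diff summable_A_term) auto
  also have "\<dots> = (\<Sum>k. (x - y) * ((-1)^k * A_diff_coeff 1 x y k))"
    using A_term_diff assms by simp
  also have "\<dots> = (x - y) * (\<Sum>k. (-1)^k * A_diff_coeff 1 x y k)"
    using assms by (intro suminf_mult alternating_A_diff_coeff(1)) auto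
  finally show ?thesis .
qed

lemma strict_mono_on_A: "strict_mono_on {0..<1} A"
proof (rule strict_mono_onI)
  fix x y :: real assume "x \<in> {0..<1}" "y \<in> {0..<1}" "x < y"
  hence "0 < (y - x) * (\<Sum>k. (-1)^k * A_diff_coeff 1 y x k)"
    using alternating_A_diff_coeff(2)[of 1 y x] by (intro mult_pos_pos) auto
  thus "A x < A y"
    using A_diff[of y x] \<open>x \<in> {0..<1}\<close> \<open>y \<in> {0..<1}\<close> by simp
qed

lemma A_diff_le:
  assumes "0 \<le> y" "y \<le> x" "x < 1"
  shows "A x - A y \<le> 2 * (x - y) / ((1 - x) * (1 - y))"
proof -
  have "A x - A y \<le> (x - y) * A_diff_coeff 1 x y 0"
    using A_diff[of x y] alternating_A_diff_coeff(3)[of 1 x y] assms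
    by (auto intro: mult_left_mono)
  thus ?thesis by (simp add: A_diff_coeff_def mult.commute)
qed

lemma continuous_on_A:
  assumes "b < 1"
  shows "continuous_on {0..b} A"
proof (rule lipschitz_on_continuous_on)
  show "(2 / (1 - b)^2)-lipschitz_on {0..b} A"
  proof (rule lipschitz_onI)
    have ordered: "dist (A x) (A y) \<le> 2 / (1 - b)^2 * dist x y"
      if "0 \<le> y" "y \<le> x" "x \<le> b" for x y :: real
    proof -
      have "(1 - b)^2 \<le> (1 - x) * (1 - y)"
        unfolding power2_eq_square using that assms by (intro mult_mono) auto
      hence "2 * (x - y) / ((1 - x) * (1 - y)) \<le> 2 * (x - y) / (1 - b)^2"
        using that assms by (intro divide_left_mono) auto
      moreover have "A y \<le> A x"
        using strict_mono_on_leD[OF strict_mono_on_A] that assms by simp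
      ultimately show ?thesis
        using A_diff_le[of y x] that assms by (simp add: dist_real_def)
    qed
    thus "dist (A x) (A y) \<le> 2 / (1 - b)^2 * dist x y" if "x \<in> {0..b}" "y \<in> {0..b}" for x y :: real
      using that ordered[of y x] ordered[of x y] by (cases "y \<le> x") (auto simp: dist_commute)
  qed (use assms in simp)
qed

definition A_tail :: "real \<Rightarrow> real" where
  "A_tail x = (\<Sum>k. A_term x (Suc k))"

text \<open>At the pole \<open>x = 1\<close> the tail telescopes, since
  \<open>(4k + 6) / ((2k + 3)\<^sup>2 - 1) = 1 / (2k + 2) + 1 / (2k + 4)\<close>.\<close>
lemma A_term_1_Suc_sums: "(\<lambda>k. A_term 1 (Suc k)) sums (-1/2)"
proof -
  define f where "f k = (-1)^k / (2 * real k + 2)" for k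
  have "(\<lambda>k. 1 / (2 * real k + 2)) \<longlonglongrightarrow> 0" by real_asymp
  hence "(\<lambda>k. norm (f k)) \<longlonglongrightarrow> 0" by (simp add: f_def norm_divide)
  hence "f \<longlonglongrightarrow> 0" by (rule tendsto_norm_zero_cancel)
  hence "(\<lambda>k. f (Suc k) - f k) sums (0 - f 0)" by (rule telescope_sums)
  moreover have "f (Suc k) - f k = A_term 1 (Suc k)" for k
  proof -
    define m where "m = real k"
    have "0 \<le> m" by (simp add: m_def)
    hence "(2 * m + 3)^2 - 1 = (2 * m + 2) * (2 * m + 4)" "2 * m + 2 \<noteq> 0" "2 * m + 4 \<noteq> 0"
      by (auto simp: algebra_simps power2_eq_square)
    hence "(4 * m + 6) / ((2 * m + 3)^2 - 1) = 1 / (2 * m + 2) + 1 / (2 * m + 4)"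
      by (simp add: field_simps)
    moreover have "A_term 1 (Suc k) = (-1)^(Suc k) * ((4 * m + 6) / ((2 * m + 3)^2 - 1))"
      by (simp add: A_term_def m_def algebra_simps)
    moreover have "f (Suc k) - f k = (-1)^(Suc k) * (1 / (2 * m + 2) + 1 / (2 * m + 4))"
      by (simp add: f_def m_def algebra_simps)
    ultimately show ?thesis by simp
  qed
  ultimately show ?thesis by (simp add: f_def)
qed

lemma summable_A_term_Suc:
  assumes "0 \<le> x" "x \<le> 1"
  shows "summable (\<lambda>k. A_term x (Suc k))"
proof -
  have "summable (\<lambda>k. A_term 0 (Suc k) - x * ((-1)^k * A_diff_coeff 3 0 x k))"
    using A_term_0_sums assms
    by (intro summable_diff summable_mult alternating_A_diff_coeff(1))
       (auto simp: sums_summable summable_Suc_iff)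
  moreover have "(\<lambda>k. A_term x (Suc k)) =
      (\<lambda>k. A_term 0 (Suc k) - x * ((-1)^k * A_diff_coeff 3 0 x k))"
    using A_term_Suc_diff[of 0 x] assms by (simp add: fun_eq_iff algebra_simps)
  ultimately show ?thesis by simp
qed

lemma A_tail_antimono:
  assumes "0 \<le> y" "y \<le> x" "x \<le> 1"
  shows "A_tail x \<le> A_tail y"
proof -
  have "A_tail y - A_tail x = (\<Sum>k. A_term y (Suc k) - A_term x (Suc k))"
    unfolding A_tail_def using assms by (intro suminf_diff summable_A_term_Suc) auto
  also have "\<dots> = (\<Sum>k. (x - y) * ((-1)^k * A_diff_coeff 3 y x k))"
    using A_term_Suc_diff assms by simp
  also have "\<dots> = (x - y) * (\<Sum>k. (-1)^k * A_diff_coeff 3 y x k)"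
    using assms by (intro suminf_mult alternating_A_diff_coeff(1)) auto
  also have "0 \<le> \<dots>"
    using alternating_A_diff_coeff(2)[of 3 y x] assms by simp
  finally show ?thesis by simp
qed

lemma A_eq_pole_plus_tail:
  assumes "0 \<le> x" "x < 1"
  shows "A x = 2 / (1 - x) + A_tail x"
  using suminf_split_head[OF summable_A_term[OF assms]]
  by (simp add: A_def A_tail_def A_term_def[of x 0])

lemma A_tail_bounds:
  assumes "0 \<le> x" "x \<le> 1"
  shows "-1/2 \<le> A_tail x" "A_tail x \<le> (pi - 4) / 2"
proof -
  have "A_tail 1 = -1/2"
    using A_term_1_Suc_sums by (simp add: A_tail_def sums_iff)
  thus "-1/2 \<le> A_tail x" using A_tail_antimono[of x 1] assms by simp
  have "A_tail 0 = (pi - 4) / 2"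
    using A_eq_pole_plus_tail[of 0] by (simp add: A_0)
  thus "A_tail x \<le> (pi - 4) / 2" using A_tail_antimono[of 0 x] assms by simp
qed

lemma filterlim_A_at_left_1: "filterlim A at_top (at_left 1)"
proof (rule filterlim_at_top_mono)
  show "filterlim (\<lambda>x::real. 2 / (1 - x) - 1/2) at_top (at_left 1)" by real_asymp
  show "\<forall>\<^sub>F x in at_left 1. 2 / (1 - x) - 1/2 \<le> A x"
    using eventually_at_left_real[OF zero_less_one]
    by eventually_elim (use A_tail_bounds(1) in \<open>auto simp: A_eq_pole_plus_tail\<close>)
qed

definition A_ereal :: "real \<Rightarrow> ereal" where
  "A_ereal x = (if x < 1 then ereal (A x) else \<infinity>)"

lemma continuous_on_A_ereal: "continuous_on {0..1} A_ereal"
  unfolding continuous_on_def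
proof
  fix x :: real assume x: "x \<in> {0..1}"
  show "(A_ereal \<longlongrightarrow> A_ereal x) (at x within {0..1})"
  proof (cases "x < 1")
    case True
    define b where "b = (x + 1) / 2"
    have "continuous_on {0..b} (\<lambda>y. ereal (A y))"
      using True by (intro continuous_on_ereal continuous_on_A) (simp add: b_def)
    moreover have "\<And>y. y \<in> {0..b} \<Longrightarrow> ereal (A y) = A_ereal y"
      using True by (simp add: A_ereal_def b_def)
    ultimately have "continuous_on {0..b} A_ereal"
      by (rule continuous_on_eq)
    moreover have "at x within {0..1} = at x within {0..b}"
      using True by (intro at_within_nhd[of _ "{..<b}"]) (auto simp: b_def)
    ultimately show ?thesis
      using x True unfolding continuous_on_def by (auto simp: b_def)
  next
    case False
    hence "x = 1" using x by simp
    have "((\<lambda>y. ereal (A y)) \<longlongrightarrow> \<infinity>) (at_left 1)"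
      using filterlim_A_at_left_1 by (simp add: tendsto_PInfty_eq_at_top)
    moreover have "\<forall>\<^sub>F y in at_left 1. ereal (A y) = A_ereal y"
      using eventually_at_left_real[OF zero_less_one] by eventually_elim (simp add: A_ereal_def)
    ultimately have "(A_ereal \<longlongrightarrow> \<infinity>) (at_left 1)"
      by (simp add: tendsto_cong)
    thus ?thesis
      using \<open>x = 1\<close> by (simp add: at_within_Icc_at_left A_ereal_def)
  qed
qed

lemma A_ge_pi_half: "x \<in> {0..<1} \<Longrightarrow> pi / 2 \<le> A x"
  using strict_mono_on_leD[OF strict_mono_on_A, of 0 x] by (simp add: A_0)

lemma A_attains_atLeast_pi_half:
  assumes "pi / 2 \<le> w"
  shows "\<exists>x\<in>{0..<1}. A x = w"
proof -
  text \<open>Choose \<open>b\<close> so that the lower bound \<open>2 / (1 - b) - 1/2\<close> equals \<open>w\<close>.\<close>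
  define b where "b = 1 - 2 / (w + 1/2)"
  have "2 < w + 1/2" using assms pi_gt3 by simp
  hence b: "0 \<le> b" "b < 1" "2 / (1 - b) - 1/2 = w" by (auto simp: b_def field_simps)
  hence "w \<le> A b" using A_eq_pole_plus_tail[of b] A_tail_bounds(1)[of b] by simp
  moreover have "A 0 \<le> w" using assms by (simp add: A_0)
  ultimately obtain x where "0 \<le> x" "x \<le> b" "A x = w"
    using IVT'[of A 0 w b] b continuous_on_A[of b] by auto
  thus ?thesis using b by auto
qed

lemma A_ereal_image: "A_ereal ` {0..1} = {ereal (pi / 2)..\<infinity>}"
proof
  show "A_ereal ` {0..1} \<subseteq> {ereal (pi / 2)..\<infinity>}"
    using A_ge_pi_half by (auto simp: A_ereal_def)
next
  show "{ereal (pi / 2)..\<infinity>} \<subseteq> A_ereal ` {0..1}"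
  proof
    fix v assume v: "v \<in> {ereal (pi / 2)..\<infinity>}"
    show "v \<in> A_ereal ` {0..1}"
    proof (cases v)
      case (real w)
      then obtain x where "x \<in> {0..<1}" "A x = w"
        using A_attains_atLeast_pi_half[of w] v by auto
      thus ?thesis using real by (force simp: A_ereal_def)
    next
      case PInf
      hence "v = A_ereal 1" by (simp add: A_ereal_def)
      thus ?thesis by simp
    qed (use v in auto)
  qed
qed

lemma inj_on_A_ereal: "inj_on A_ereal {0..1}"
proof -
  have "inj_on A {0..<1}" by (rule strict_mono_on_imp_inj_on[OF strict_mono_on_A])
  thus ?thesis by (auto simp: inj_on_def A_ereal_def split: if_splits)
qed

theorem lemma5:
  shows "(\<forall>x\<in>{0..<1}. summable (A_term x))
    \<and> strict_mono_on {0..<1} A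
    \<and> A 0 = pi / 2
    \<and> (\<forall>x\<in>{0..<1}. -1/2 \<le> A x - 2 / (1 - x) \<and> A x - 2 / (1 - x) \<le> (pi - 4) / 2)
    \<and> (pi - 4) / 2 < -0.42
    \<and> (\<exists>B :: real \<Rightarrow> ereal. (\<forall>x\<in>{0..<1}. B x = ereal (A x))
          \<and> (\<exists>g. homeomorphism {0..1} {ereal (pi / 2)..\<infinity>} B g))"
proof (intro conjI)
  show "\<forall>x\<in>{0..<1}. summable (A_term x)" using summable_A_term by auto
  show "strict_mono_on {0..<1} A" by (rule strict_mono_on_A)
  show "A 0 = pi / 2" by (rule A_0)
  show "\<forall>x\<in>{0..<1}. -1/2 \<le> A x - 2 / (1 - x) \<and> A x - 2 / (1 - x) \<le> (pi - 4) / 2"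
    using A_eq_pole_plus_tail A_tail_bounds by auto
  show "(pi - 4) / 2 < -0.42" using pi_approx by simp
  obtain g where "homeomorphism {0..1} {ereal (pi / 2)..\<infinity>} A_ereal g"
    using homeomorphism_compact[OF compact_Icc continuous_on_A_ereal A_ereal_image inj_on_A_ereal]
    by blast
  moreover have "\<forall>x\<in>{0..<1}. A_ereal x = ereal (A x)" by (simp add: A_ereal_def)
  ultimately show "\<exists>B :: real \<Rightarrow> ereal. (\<forall>x\<in>{0..<1}. B x = ereal (A x))
          \<and> (\<exists>g. homeomorphism {0..1} {ereal (pi / 2)..\<infinity>} B g)" by blast
qed

end
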